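(* Let $G$ be a perfect matching on $n=2k$ vertices labelled $u_iw_j$ with $i\in\{1,\dots,k\}$ and $j\in\{1,2\}$. Then $\rho(G)$ is separable in $\mathbb{C}^k_A\otimes\mathbb{C}^2_B$ if and only if $\Delta(G)=\Delta(G^{\Gamma_B})$.
   Context: A perfect matching is a simple graph $G=(V,E)$ in which every vertex $v$ belongs to exactly one edge. For a simple graph: $M(G)$ is the adjacency matrix, $\Delta(G)$ the diagonal degree matrix, $L(G)=\Delta(G)-M(G)$, $\rho(G)=\frac{1}{2|E|}L(G)$. Vertex $u_iw_j$ is identified with $|u_i\rangle\otimes|w_j\rangle$ for orthonormal bases $\{|u_i\rangle\}$ of $\mathbb{C}^k_A$ and $\{|w_j\rangle\}$ of $\mathbb{C}^2_B$. The partial transpose $G^{\Gamma_B}=(V,E')$ has $\{u_iw_j,u_{i'}w_{j'}\}\in E'$ iff $\{u_iw_{j'},u_{i'}w_j\}\in E$. Separable means a convex combination of product states. *)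

theory Defs
  imports Complex_Main
begin

text \<open>Vertices are pairs (i,j): i indexes the basis of C^k_A (a finite type 'a with CARD('a) = k),
j indexes the basis of C^2_B (the type bool, two elements).\<close>

type_synonym 'i cmat = "'i \<Rightarrow> 'i \<Rightarrow> complex"

definition simple_graph :: "('v \<Rightarrow> 'v \<Rightarrow> bool) \<Rightarrow> bool" where
  "simple_graph E \<longleftrightarrow> (\<forall>v w. E v w \<longrightarrow> E w v) \<and> (\<forall>v. \<not> E v v)"

definition perfect_matching :: "('v \<Rightarrow> 'v \<Rightarrow> bool) \<Rightarrow> bool" where
  "perfect_matching E \<longleftrightarrow> simple_graph E \<and> (\<forall>v. \<exists>!w. E v w)"

definition degree :: "('v::finite \<Rightarrow> 'v \<Rightarrow> bool) \<Rightarrow> 'v \<Rightarrow> nat" where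
  "degree E v = card {w. E v w}"

definition num_edges :: "('v::finite \<Rightarrow> 'v \<Rightarrow> bool) \<Rightarrow> nat" where
  "num_edges E = card {{v, w} | v w. E v w}"

definition adj_mat :: "('v::finite \<Rightarrow> 'v \<Rightarrow> bool) \<Rightarrow> 'v cmat" where
  "adj_mat E v w = (if E v w then 1 else 0)"

definition deg_mat :: "('v::finite \<Rightarrow> 'v \<Rightarrow> bool) \<Rightarrow> 'v cmat" where
  "deg_mat E v w = (if v = w then of_nat (degree E v) else 0)"

definition laplacian :: "('v::finite \<Rightarrow> 'v \<Rightarrow> bool) \<Rightarrow> 'v cmat" where
  "laplacian E v w = deg_mat E v w - adj_mat E v w"

definition density_of_graph :: "('v::finite \<Rightarrow> 'v \<Rightarrow> bool) \<Rightarrow> 'v cmat" where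
  "density_of_graph E v w = laplacian E v w / of_nat (2 * num_edges E)"

definition partial_transpose_graph ::
  "('a \<times> 'b \<Rightarrow> 'a \<times> 'b \<Rightarrow> bool) \<Rightarrow> 'a \<times> 'b \<Rightarrow> 'a \<times> 'b \<Rightarrow> bool" where
  "partial_transpose_graph E = (\<lambda>(i, j) (i', j'). E (i, j') (i', j))"

definition hermitian :: "('i::finite) cmat \<Rightarrow> bool" where
  "hermitian M \<longleftrightarrow> (\<forall>i j. M i j = cnj (M j i))"

definition psd :: "('i::finite) cmat \<Rightarrow> bool" where
  "psd M \<longleftrightarrow> hermitian M \<and>
     (\<forall>x :: 'i \<Rightarrow> complex. 0 \<le> Re (\<Sum>i\<in>UNIV. \<Sum>j\<in>UNIV. cnj (x i) * M i j * x j))"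

definition trace :: "('i::finite) cmat \<Rightarrow> complex" where
  "trace M = (\<Sum>i\<in>UNIV. M i i)"

definition density_matrix :: "('i::finite) cmat \<Rightarrow> bool" where
  "density_matrix M \<longleftrightarrow> psd M \<and> trace M = 1"

text \<open>Tensor (Kronecker) product, with (i,j) identified with |u_i> \<otimes> |w_j>.\<close>
definition tensor :: "'a cmat \<Rightarrow> 'b cmat \<Rightarrow> ('a \<times> 'b) cmat" where
  "tensor A B = (\<lambda>(i, j) (i', j'). A i i' * B j j')"

definition separable :: "(('a::finite) \<times> ('b::finite)) cmat \<Rightarrow> bool" where
  "separable \<rho> \<longleftrightarrow> (\<exists>(n::nat) (p :: nat \<Rightarrow> real) (A :: nat \<Rightarrow> 'a cmat) (B :: nat \<Rightarrow> 'b cmat).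
      (\<forall>m<n. 0 \<le> p m \<and> density_matrix (A m) \<and> density_matrix (B m)) \<and>
      (\<Sum>m<n. p m) = 1 \<and>
      \<rho> = (\<lambda>v w. \<Sum>m<n. of_real (p m) * tensor (A m) (B m) v w))"

end

theory Submission
  imports Defs "HOL-Library.Complex_Order" "HOL-Combinatorics.Cycles"
begin

(* Necessity holds for every graph.  The Laplacian annihilates the all-ones vector, so the
   entries of rho(G) sum to zero.  For a separable state this sum is a nonnegative combination
   of products of entry sums of positive semidefinite factors, so in every product term some
   factor has entry sum zero, and then all its row sums vanish.  Hence all row sums of the
   partial transpose of rho(G) vanish; for L(G) these row sums are the differences of the
   degrees in G and in G^Gamma.

   Sufficiency: for a perfect matching with mate m, L(G) is half the sum of the projectors onto
   the edge vectors psi_v = e_v - e_m(v).  Edges inside one layer give product vectors.  The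
   degree condition forces the edges between the layers to be {u_i w_1, u_tau(i) w_2} for a
   permutation tau of a set F of indices.  If tau^N = id, the Fourier transforms
   sum_t omega^(st) psi_(u_tau^t(i) w_1) along the orbits of tau are product vectors, and by
   Parseval their projectors add up to N^2 times the part of L(G) coming from these edges. *)

section \<open>Positive semidefinite matrices\<close>

definition row_sum :: "'i::finite cmat \<Rightarrow> 'i \<Rightarrow> complex" where
  "row_sum M v = (\<Sum>w\<in>UNIV. M v w)"

definition entry_sum :: "'i::finite cmat \<Rightarrow> complex" where
  "entry_sum M = (\<Sum>v\<in>UNIV. row_sum M v)"

definition quad_form :: "'i::finite cmat \<Rightarrow> ('i \<Rightarrow> complex) \<Rightarrow> complex" where
  "quad_form M x = (\<Sum>i\<in>UNIV. \<Sum>j\<in>UNIV. cnj (x i) * M i j * x j)"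

definition basis_vec :: "'i \<Rightarrow> 'i \<Rightarrow> complex" where
  "basis_vec c x = (if x = c then 1 else 0)"

lemma psd_iff_quad_form: "psd M \<longleftrightarrow> hermitian M \<and> (\<forall>x. 0 \<le> Re (quad_form M x))"
  unfolding psd_def quad_form_def ..

lemma cnj_basis_vec [simp]: "cnj (basis_vec c x) = basis_vec c x"
  by (simp add: basis_vec_def)

lemma sum_basis_vec_mult [simp]: "(\<Sum>x\<in>UNIV. basis_vec c x * f x) = f (c::'i::finite)"
proof -
  have "(\<Sum>x\<in>UNIV. basis_vec c x * f x) = (\<Sum>x\<in>UNIV. if x = c then f x else 0)"
    by (rule sum.cong) (simp_all add: basis_vec_def)
  then show ?thesis by simp
qed

lemma sum_mult_basis_vec [simp]: "(\<Sum>x\<in>UNIV. f x * basis_vec c x) = f (c::'i::finite)"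
  by (subst mult.commute) (rule sum_basis_vec_mult)

lemma quad_form_basis_vec: "quad_form M (basis_vec v) = M v v"
  by (simp add: quad_form_def)

lemma psd_diag_nonneg: "psd M \<Longrightarrow> 0 \<le> Re (M v v)"
  by (metis psd_iff_quad_form quad_form_basis_vec)

lemma hermitian_col_sum:
  assumes "hermitian M"
  shows "(\<Sum>w\<in>UNIV. M w v) = cnj (row_sum M v)"
proof -
  have "M w v = cnj (M v w)" for w
    using assms by (metis hermitian_def)
  then show ?thesis
    by (simp add: row_sum_def cnj_sum)
qed

lemma hermitian_entry_sum_real:
  assumes "hermitian M"
  shows "entry_sum M \<in> \<real>"
proof -
  have "cnj (entry_sum M) = (\<Sum>v\<in>UNIV. \<Sum>w\<in>UNIV. M w v)"
    using hermitian_col_sum[OF assms] by (simp add: entry_sum_def cnj_sum)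
  also have "\<dots> = entry_sum M"
    unfolding entry_sum_def row_sum_def by (rule sum.swap)
  finally show ?thesis by (simp add: Reals_cnj_iff)
qed

lemma psd_entry_sum_nonneg:
  assumes "psd M"
  shows "0 \<le> entry_sum M"
proof -
  have "entry_sum M = quad_form M (\<lambda>_. 1)"
    by (simp add: entry_sum_def row_sum_def quad_form_def)
  then have "0 \<le> Re (entry_sum M)"
    using assms by (simp add: psd_iff_quad_form)
  moreover have "Im (entry_sum M) = 0"
    using assms hermitian_entry_sum_real complex_is_Real_iff by (auto simp: psd_def)
  ultimately show ?thesis by (simp add: less_eq_complex_def)
qed

lemma quad_form_one_plus_basis_vec:
  "quad_form M (\<lambda>i. 1 + \<beta> * basis_vec v i)
     = entry_sum M + cnj \<beta> * row_sum M v + \<beta> * (\<Sum>i\<in>UNIV. M i v) + cnj \<beta> * \<beta> * M v v"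
proof -
  have expand: "cnj (1 + \<beta> * basis_vec v i) * M i j * (1 + \<beta> * basis_vec v j)
     = M i j + cnj \<beta> * (basis_vec v i * M i j) + \<beta> * (M i j * basis_vec v j)
       + cnj \<beta> * \<beta> * (basis_vec v i * M i j * basis_vec v j)" for i j
    by (simp add: algebra_simps)
  have "quad_form M (\<lambda>i. 1 + \<beta> * basis_vec v i)
     = entry_sum M + cnj \<beta> * (\<Sum>i\<in>UNIV. \<Sum>j\<in>UNIV. basis_vec v i * M i j)
       + \<beta> * (\<Sum>i\<in>UNIV. \<Sum>j\<in>UNIV. M i j * basis_vec v j)
       + cnj \<beta> * \<beta> * (\<Sum>i\<in>UNIV. \<Sum>j\<in>UNIV. basis_vec v i * M i j * basis_vec v j)"
    unfolding quad_form_def expand by (simp only: sum.distrib sum_distrib_left entry_sum_def row_sum_def)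
  also have "(\<Sum>i\<in>UNIV. \<Sum>j\<in>UNIV. basis_vec v i * M i j) = row_sum M v"
    by (simp add: row_sum_def sum_distrib_left[symmetric])
  also have "(\<Sum>i\<in>UNIV. \<Sum>j\<in>UNIV. M i j * basis_vec v j) = (\<Sum>i\<in>UNIV. M i v)"
    by simp
  also have "(\<Sum>i\<in>UNIV. \<Sum>j\<in>UNIV. basis_vec v i * M i j * basis_vec v j) = M v v"
    by simp
  finally show ?thesis .
qed

text \<open>Positivity of the quadratic form at \<open>1 - t z e\<^sub>v\<close>, with \<open>z\<close> the \<open>v\<close>-th row sum,
  reads \<open>t |z|\<^sup>2 (t M\<^sub>v\<^sub>v - 2) \<ge> 0\<close>; small \<open>t > 0\<close> forces \<open>z = 0\<close>.\<close>
lemma psd_row_sum_eq_0: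
  assumes psd: "psd M" and "entry_sum M = 0"
  shows "row_sum M v = 0"
proof (rule ccontr)
  define z where "z = row_sum M v"
  define n where "n = (cmod z)\<^sup>2"
  define c where "c = Re (M v v)"
  define t where "t = 1 / (c + 1)"
  assume "row_sum M v \<noteq> 0"
  then have "0 < n" by (simp add: z_def n_def)
  moreover have "0 \<le> c" "0 < t" "t * c < 1"
    using psd_diag_nonneg[OF psd, of v] by (auto simp: c_def t_def field_simps)
  ultimately have neg: "t * n * (t * c - 2) < 0"
    by (intro mult_pos_neg) auto
  define \<beta> where "\<beta> = - of_real t * z"
  have nz: "z * cnj z = of_real n"
    using complex_norm_square[of z] by (simp add: n_def)
  have "cnj \<beta> * z = - of_real (t * n)" "\<beta> * cnj z = - of_real (t * n)"
    "cnj \<beta> * \<beta> = of_real (t * t * n)"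
    unfolding \<beta>_def by (simp_all add: nz[symmetric] algebra_simps)
  moreover have "(\<Sum>i\<in>UNIV. M i v) = cnj z"
    using hermitian_col_sum[of M v] psd unfolding psd_def z_def by blast
  ultimately have "quad_form M (\<lambda>i. 1 + \<beta> * basis_vec v i)
      = - of_real (t * n) - of_real (t * n) + of_real (t * t * n) * M v v"
    unfolding quad_form_one_plus_basis_vec \<open>entry_sum M = 0\<close> z_def[symmetric] by simp
  then have "Re (quad_form M (\<lambda>i. 1 + \<beta> * basis_vec v i))
      = Re (- of_real (t * n) - of_real (t * n) + of_real (t * t * n) * M v v)"
    by (rule arg_cong)
  also have "\<dots> = t * n * (t * c - 2)"
    by (simp add: c_def algebra_simps)
  finally have "Re (quad_form M (\<lambda>i. 1 + \<beta> * basis_vec v i)) = t * n * (t * c - 2)" .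
  with neg psd show False
    by (metis psd_iff_quad_form not_le)
qed

section \<open>Separable states and the partial transpose\<close>

definition partial_transpose :: "('a \<times> 'b) cmat \<Rightarrow> ('a \<times> 'b) cmat" where
  "partial_transpose M = (\<lambda>(i, j) (i', j'). M (i, j') (i', j))"

lemma sum_UNIV_pair:
  "(\<Sum>v\<in>UNIV. f v) = (\<Sum>i\<in>UNIV. \<Sum>j\<in>UNIV. f (i, j))"
  for f :: "'a::finite \<times> 'b::finite \<Rightarrow> 'c::comm_monoid_add"
  by (simp add: sum.cartesian_product)

lemma entry_sum_tensor: "entry_sum (tensor A B) = entry_sum A * entry_sum B"
  by (simp add: entry_sum_def row_sum_def sum_UNIV_pair tensor_def sum_product)

lemma row_sum_partial_transpose_tensor:
  "row_sum (partial_transpose (tensor A B)) (a, b) = row_sum A a * (\<Sum>j\<in>UNIV. B j b)"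
  by (simp add: row_sum_def partial_transpose_def tensor_def sum_UNIV_pair sum_product)

lemma entry_sum_weighted_sum:
  "entry_sum (\<lambda>v w. \<Sum>m\<in>S. c m * M m v w) = (\<Sum>m\<in>S. c m * entry_sum (M m))"
  by (simp add: entry_sum_def row_sum_def sum_distrib_left sum.swap[of _ S])

lemma row_sum_partial_transpose_weighted_sum:
  "row_sum (partial_transpose (\<lambda>v w. \<Sum>m\<in>S. c m * M m v w)) v
     = (\<Sum>m\<in>S. c m * row_sum (partial_transpose (M m)) v)"
  by (simp add: row_sum_def partial_transpose_def sum_distrib_left sum.swap[of _ S] case_prod_beta)

lemma separable_partial_transpose_row_sum_eq_0:
  fixes \<rho> :: "('a::finite \<times> 'b::finite) cmat"
  assumes "separable \<rho>" and "entry_sum \<rho> = 0"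
  shows "row_sum (partial_transpose \<rho>) v = 0"
proof -
  obtain n :: nat and p A B where props: "\<forall>m<n. 0 \<le> p m \<and> density_matrix (A m) \<and> density_matrix (B m)"
    and \<rho>: "\<rho> = (\<lambda>v w. \<Sum>m<n. of_real (p m) * tensor (A m) (B m) v w)"
    using assms(1) unfolding separable_def by blast
  have psd: "psd (A m)" "psd (B m)" if "m < n" for m
    using props that by (auto simp: density_matrix_def)
  have "0 \<le> of_real (p m) * (entry_sum (A m) * entry_sum (B m))" if "m < n" for m
    using props that psd_entry_sum_nonneg[OF psd(1)] psd_entry_sum_nonneg[OF psd(2)]
    by (intro mult_nonneg_nonneg) (auto simp: less_eq_complex_def)
  moreover have "(\<Sum>m<n. of_real (p m) * (entry_sum (A m) * entry_sum (B m))) = 0"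
    using assms(2) by (simp add: \<rho> entry_sum_weighted_sum entry_sum_tensor)
  ultimately have vanish: "of_real (p m) * (entry_sum (A m) * entry_sum (B m)) = 0" if "m < n" for m
    using that by (subst (asm) sum_nonneg_eq_0_iff) auto
  obtain a b where v: "v = (a, b)" by fastforce
  have terms: "of_real (p m) * row_sum (partial_transpose (tensor (A m) (B m))) (a, b) = 0"
    if "m < n" for m
    using vanish[OF that] psd_row_sum_eq_0[OF psd(1)[OF that]] psd_row_sum_eq_0[OF psd(2)[OF that]]
      hermitian_col_sum[of "B m" b] psd(2)[OF that]
    by (auto simp: row_sum_partial_transpose_tensor psd_def)
  show ?thesis
    unfolding \<rho> v row_sum_partial_transpose_weighted_sum using terms by (intro sum.neutral) auto
qed

lemma sum_indicator_eq_card: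
  "(\<Sum>w\<in>UNIV. if P w then 1 else 0) = (of_nat (card {w::'i::finite. P w}) :: complex)"
  by (simp add: sum.If_cases)

lemma row_sum_adj_mat: "row_sum (adj_mat E) v = of_nat (degree E v)"
  by (simp add: row_sum_def adj_mat_def degree_def sum_indicator_eq_card)

lemma row_sum_deg_mat: "row_sum (deg_mat E) v = of_nat (degree E v)"
  by (simp add: row_sum_def deg_mat_def)

lemma row_sum_laplacian: "row_sum (laplacian E) v = 0"
  by (simp add: row_sum_def laplacian_def sum_subtractf row_sum_adj_mat[unfolded row_sum_def]
      row_sum_deg_mat[unfolded row_sum_def])

lemma entry_sum_laplacian: "entry_sum (laplacian E) = 0"
  by (simp add: entry_sum_def row_sum_laplacian)

lemma partial_transpose_adj_mat: "partial_transpose (adj_mat E) = adj_mat (partial_transpose_graph E)"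
  by (auto simp: partial_transpose_def adj_mat_def partial_transpose_graph_def fun_eq_iff)

lemma partial_transpose_deg_mat: "partial_transpose (deg_mat E) = deg_mat E"
  by (auto simp: partial_transpose_def deg_mat_def fun_eq_iff)

lemma row_sum_partial_transpose_laplacian:
  "row_sum (partial_transpose (laplacian E)) v
     = of_nat (degree E v) - of_nat (degree (partial_transpose_graph E) v)"
proof -
  have "partial_transpose (laplacian E) v w
      = partial_transpose (deg_mat E) v w - partial_transpose (adj_mat E) v w" for v w
    by (simp add: partial_transpose_def laplacian_def case_prod_beta)
  then have "partial_transpose (laplacian E) v w
      = deg_mat E v w - adj_mat (partial_transpose_graph E) v w" for v w
    by (simp add: partial_transpose_deg_mat partial_transpose_adj_mat)
  then show ?thesis
    by (simp add: row_sum_def sum_subtractf row_sum_adj_mat[unfolded row_sum_def]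
        row_sum_deg_mat[unfolded row_sum_def])
qed

lemma num_edges_eq_0_iff: "num_edges E = 0 \<longleftrightarrow> (\<forall>v w. \<not> E v w)"
proof -
  have "finite {{v, w} | v w. E v w}"
    by (rule finite_subset[of _ "Pow UNIV"]) auto
  then show ?thesis
    by (auto simp: num_edges_def)
qed

lemma separable_density_of_graph_imp_deg_mat_eq:
  fixes E :: "'a::finite \<times> 'b::finite \<Rightarrow> 'a \<times> 'b \<Rightarrow> bool"
  assumes "separable (density_of_graph E)"
  shows "deg_mat E = deg_mat (partial_transpose_graph E)"
proof (cases "num_edges E = 0")
  case True
  then have "partial_transpose_graph E = E"
    by (auto simp: num_edges_eq_0_iff partial_transpose_graph_def fun_eq_iff)
  then show ?thesis by simp
next
  case False
  define c :: complex where "c = of_nat (2 * num_edges E)"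
  have "c \<noteq> 0" using False by (simp add: c_def)
  have "entry_sum (density_of_graph E) = entry_sum (laplacian E) / c"
    by (simp add: entry_sum_def row_sum_def density_of_graph_def c_def sum_divide_distrib)
  then have "row_sum (partial_transpose (density_of_graph E)) v = 0" for v
    using assms by (intro separable_partial_transpose_row_sum_eq_0) (simp_all add: entry_sum_laplacian)
  moreover have "row_sum (partial_transpose (density_of_graph E)) v
      = row_sum (partial_transpose (laplacian E)) v / c" for v
    by (simp add: row_sum_def partial_transpose_def density_of_graph_def c_def case_prod_beta
        sum_divide_distrib)
  ultimately have "degree E v = degree (partial_transpose_graph E) v" for v
    using \<open>c \<noteq> 0\<close> by (simp add: row_sum_partial_transpose_laplacian)
  then show ?thesis
    by (simp add: deg_mat_def fun_eq_iff)
qed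

section \<open>The cone of separable matrices\<close>

definition outer :: "('i \<Rightarrow> complex) \<Rightarrow> 'i cmat" where
  "outer x = (\<lambda>i j. x i * cnj (x j))"

definition tensor_vec :: "('a \<Rightarrow> complex) \<Rightarrow> ('b \<Rightarrow> complex) \<Rightarrow> 'a \<times> 'b \<Rightarrow> complex" where
  "tensor_vec x y = (\<lambda>(i, j). x i * y j)"

definition sqnorm :: "('i::finite \<Rightarrow> complex) \<Rightarrow> real" where
  "sqnorm x = (\<Sum>i\<in>UNIV. (cmod (x i))\<^sup>2)"

text \<open>The zero vector, which spans no state, is sent to an arbitrary pure state.\<close>
definition pure_state :: "('i::finite \<Rightarrow> complex) \<Rightarrow> 'i cmat" where
  "pure_state x =
     (if x = (\<lambda>_. 0) then outer (basis_vec undefined) else (\<lambda>i j. outer x i j / of_real (sqnorm x)))"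

lemma sqnorm_eq_0_iff: "sqnorm x = 0 \<longleftrightarrow> x = (\<lambda>_. 0)"
  by (simp add: sqnorm_def sum_nonneg_eq_0_iff fun_eq_iff)

lemma sqnorm_basis_vec: "sqnorm (basis_vec c :: 'i::finite \<Rightarrow> complex) = 1"
proof -
  have "(cmod (basis_vec c i))\<^sup>2 = (if i = c then 1 else 0)" for i
    by (simp add: basis_vec_def)
  then show ?thesis
    by (simp add: sqnorm_def)
qed

lemma trace_outer: "trace (outer x) = of_real (sqnorm x)"
  by (simp add: trace_def outer_def sqnorm_def complex_norm_square[symmetric])

lemma quad_form_outer: "quad_form (outer x) y = of_real ((cmod (\<Sum>i\<in>UNIV. cnj (y i) * x i))\<^sup>2)"
proof -
  have "quad_form (outer x) y = (\<Sum>i\<in>UNIV. cnj (y i) * x i) * cnj (\<Sum>i\<in>UNIV. cnj (y i) * x i)"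
    by (simp add: quad_form_def outer_def cnj_sum sum_product mult_ac)
  then show ?thesis
    by (simp only: complex_norm_square)
qed

lemma density_matrix_pure_state: "density_matrix (pure_state x)"
proof -
  have "density_matrix (\<lambda>i j. outer x i j / of_real (sqnorm x))" if "x \<noteq> (\<lambda>_. 0)" for x :: "'a \<Rightarrow> complex"
  proof -
    have pos: "0 < sqnorm x"
      using that sqnorm_eq_0_iff[of x] by (simp add: sqnorm_def sum_nonneg less_le)
    have "hermitian (\<lambda>i j. outer x i j / of_real (sqnorm x))"
      by (simp add: hermitian_def outer_def)
    moreover have "quad_form (\<lambda>i j. outer x i j / of_real (sqnorm x)) y
        = quad_form (outer x) y / of_real (sqnorm x)" for y
      by (simp add: quad_form_def sum_divide_distrib)
    moreover have "trace (\<lambda>i j. outer x i j / of_real (sqnorm x)) = 1"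
      using pos trace_outer[of x] by (simp add: trace_def sum_divide_distrib[symmetric])
    ultimately show ?thesis
      using pos by (simp add: density_matrix_def psd_iff_quad_form quad_form_outer)
  qed
  from this[of x] this[of "basis_vec undefined"] show ?thesis
    by (simp add: pure_state_def sqnorm_basis_vec basis_vec_def fun_eq_iff)
qed

lemma sqnorm_tensor_vec: "sqnorm (tensor_vec x y) = sqnorm x * sqnorm y"
  by (simp add: sqnorm_def tensor_vec_def sum_UNIV_pair sum_product norm_mult power_mult_distrib)

lemma tensor_outer: "tensor (outer x) (outer y) = outer (tensor_vec x y)"
  by (simp add: tensor_def outer_def tensor_vec_def fun_eq_iff case_prod_beta mult_ac)

lemma outer_tensor_vec_eq_scaled_pure_states:
  "outer (tensor_vec x y) v w
     = of_real (sqnorm x * sqnorm y) * tensor (pure_state x) (pure_state y) v w"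
proof (cases "x = (\<lambda>_. 0) \<or> y = (\<lambda>_. 0)")
  case True
  then show ?thesis
    by (auto simp: outer_def tensor_vec_def sqnorm_eq_0_iff case_prod_beta)
next
  case False
  then show ?thesis
    by (simp add: pure_state_def sqnorm_eq_0_iff tensor_def case_prod_beta
        flip: tensor_outer)
qed

text \<open>Nonnegative weights are absorbed into the vectors.\<close>
definition separable_cone :: "(('a::finite \<times> 'b::finite) cmat) \<Rightarrow> bool" where
  "separable_cone M \<longleftrightarrow>
     (\<exists>xs. M = (\<lambda>v w. \<Sum>(x, y)\<leftarrow>xs. outer (tensor_vec x y) v w))"

lemma separable_cone_zero: "separable_cone (\<lambda>v w. 0)"
  unfolding separable_cone_def by (rule exI[of _ "[]"]) simp

lemma separable_cone_outer_tensor_vec: "separable_cone (outer (tensor_vec x y))"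
  unfolding separable_cone_def by (rule exI[of _ "[(x, y)]"]) simp

lemma separable_cone_add:
  assumes "separable_cone M" and "separable_cone N"
  shows "separable_cone (\<lambda>v w. M v w + N v w)"
proof -
  obtain xs ys where "M = (\<lambda>v w. \<Sum>(x, y)\<leftarrow>xs. outer (tensor_vec x y) v w)"
    and "N = (\<lambda>v w. \<Sum>(x, y)\<leftarrow>ys. outer (tensor_vec x y) v w)"
    using assms unfolding separable_cone_def by blast
  then show ?thesis
    unfolding separable_cone_def by (intro exI[of _ "xs @ ys"]) simp
qed

lemma separable_cone_scale:
  fixes M :: "('a::finite \<times> 'b::finite) cmat"
  assumes "0 \<le> c" and "separable_cone M"
  shows "separable_cone (\<lambda>v w. of_real c * M v w)"
proof -
  obtain xs where M: "M = (\<lambda>v w. \<Sum>(x, y)\<leftarrow>xs. outer (tensor_vec x y) v w)"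
    using assms(2) unfolding separable_cone_def by blast
  define scale :: "('a \<Rightarrow> complex) \<times> ('b \<Rightarrow> complex) \<Rightarrow> ('a \<Rightarrow> complex) \<times> ('b \<Rightarrow> complex)"
    where "scale = (\<lambda>(x, y). (\<lambda>i. of_real (sqrt c) * x i, y))"
  have scaled: "outer (tensor_vec (\<lambda>i. of_real (sqrt c) * x i) y)
      = (\<lambda>v w. of_real c * outer (tensor_vec x y) v w)" for x y
    using assms(1) by (simp add: fun_eq_iff outer_def tensor_vec_def case_prod_beta algebra_simps
        flip: of_real_mult)
  have "(\<Sum>(x, y)\<leftarrow>map scale xs. outer (tensor_vec x y) v w) = of_real c * M v w" for v w
    unfolding M by (induction xs) (simp_all add: scale_def scaled distrib_left case_prod_beta)
  then show ?thesis
    unfolding separable_cone_def by (intro exI[of _ "map scale xs"]) (simp add: fun_eq_iff)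
qed

lemma separable_cone_sum:
  assumes "finite S" and "\<And>s. s \<in> S \<Longrightarrow> separable_cone (M s)"
  shows "separable_cone (\<lambda>v w. \<Sum>s\<in>S. M s v w)"
  using assms by (induction S rule: finite_induct) (auto intro: separable_cone_zero separable_cone_add)

lemma separable_if_separable_cone:
  assumes "separable_cone \<rho>" and "trace \<rho> = 1"
  shows "separable \<rho>"
proof -
  obtain xs where \<rho>: "\<rho> = (\<lambda>v w. \<Sum>(x, y)\<leftarrow>xs. outer (tensor_vec x y) v w)"
    using assms(1) unfolding separable_cone_def by blast
  define p where "p m = sqnorm (fst (xs ! m)) * sqnorm (snd (xs ! m))" for m
  define A where "A m = pure_state (fst (xs ! m))" for m
  define B where "B m = pure_state (snd (xs ! m))" for m
  have \<rho>_nth: "\<rho> v w = (\<Sum>m<length xs. outer (tensor_vec (fst (xs ! m)) (snd (xs ! m))) v w)" for v w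
    by (simp add: \<rho> sum_list_sum_nth atLeast0LessThan case_prod_beta)
  have "\<rho> = (\<lambda>v w. \<Sum>m<length xs. of_real (p m) * tensor (A m) (B m) v w)"
    by (simp add: fun_eq_iff \<rho>_nth p_def A_def B_def outer_tensor_vec_eq_scaled_pure_states)
  moreover have "(\<Sum>m<length xs. p m) = 1"
  proof -
    have "trace \<rho> = (\<Sum>v\<in>UNIV. \<Sum>m<length xs. outer (tensor_vec (fst (xs ! m)) (snd (xs ! m))) v v)"
      by (simp add: trace_def \<rho>_nth)
    also have "\<dots> = (\<Sum>m<length xs. trace (outer (tensor_vec (fst (xs ! m)) (snd (xs ! m)))))"
      unfolding trace_def by (rule sum.swap)
    finally have "of_real (\<Sum>m<length xs. p m) = (1 :: complex)"
      using assms(2) by (simp add: trace_outer sqnorm_tensor_vec p_def)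
    then show ?thesis
      by (simp flip: of_real_sum)
  qed
  moreover have "0 \<le> p m" for m
    by (simp add: p_def sqnorm_def sum_nonneg)
  ultimately show ?thesis
    unfolding separable_def
    by (intro exI[of _ "length xs"] exI[of _ p] exI[of _ A] exI[of _ B])
      (simp add: A_def B_def density_matrix_pure_state)
qed

section \<open>Discrete Fourier transform along a periodic orbit\<close>

definition unity_root :: "nat \<Rightarrow> complex" where
  "unity_root N = cis (2 * pi / real N)"

lemma unity_root_power: "unity_root N ^ k = cis (2 * pi * real k / real N)"
  by (simp add: unity_root_def DeMoivre field_simps)

lemma unity_root_power_N: "0 < N \<Longrightarrow> unity_root N ^ N = 1"
  by (simp add: unity_root_power)

lemma cnj_unity_root_power_mult: "cnj (unity_root N ^ k) * unity_root N ^ k = 1"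
  by (simp add: unity_root_power cis_cnj cis_mult)

lemma sum_unity_root_orthogonal:
  assumes N: "0 < N" and "t < N" and "t' < N"
  shows "(\<Sum>s<N. unity_root N ^ (s * t) * cnj (unity_root N ^ (s * t')))
    = (if t = t' then of_nat N else 0)"
proof -
  define u where "u = unity_root N ^ t * cnj (unity_root N ^ t')"
  have powers: "unity_root N ^ (s * t) * cnj (unity_root N ^ (s * t')) = u ^ s" for s
    by (simp add: u_def power_mult power_mult_distrib mult.commute[of s])
  show ?thesis
  proof (cases "t = t'")
    case True
    then have "u = 1"
      using cnj_unity_root_power_mult[of N t'] by (simp add: u_def mult.commute)
    then show ?thesis
      unfolding powers using True by simp
  next
    case False
    have "u ^ N = 1"
      using unity_root_power_N[OF N]
      by (simp add: u_def power_mult_distrib flip: power_mult complex_cnj_power)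
        (simp add: power_mult mult.commute[of _ N])
    moreover have "u \<noteq> 1"
    proof
      assume "u = 1"
      then have "unity_root N ^ t = unity_root N ^ t'"
        using cnj_unity_root_power_mult[of N t'] unfolding u_def
        by (metis mult.assoc mult.left_neutral mult.right_neutral)
      then show False
        using False bij_betw_roots_unity[OF N] \<open>t < N\<close> \<open>t' < N\<close>
        by (auto simp: unity_root_power bij_betw_def inj_on_def)
    qed
    ultimately show ?thesis
      unfolding powers using False by (simp add: geometric_sum)
  qed
qed

lemma sum_outer_dft:
  assumes N: "0 < N"
  shows "(\<Sum>s<N. outer (\<lambda>z. \<Sum>t<N. unity_root N ^ (s * t) * \<phi> t z) x y)
    = of_nat N * (\<Sum>t<N. outer (\<phi> t) x y)"
proof -
  have "(\<Sum>s<N. outer (\<lambda>z. \<Sum>t<N. unity_root N ^ (s * t) * \<phi> t z) x y)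
      = (\<Sum>s<N. \<Sum>t<N. \<Sum>t'<N. unity_root N ^ (s * t) * cnj (unity_root N ^ (s * t'))
            * (\<phi> t x * cnj (\<phi> t' y)))"
    by (simp add: outer_def cnj_sum sum_product mult_ac)
  also have "\<dots> = (\<Sum>t<N. \<Sum>t'<N. (\<Sum>s<N. unity_root N ^ (s * t) * cnj (unity_root N ^ (s * t')))
            * (\<phi> t x * cnj (\<phi> t' y)))"
    by (subst sum.swap, rule sum.cong[OF refl], subst sum.swap) (simp add: sum_distrib_right)
  also have "\<dots> = (\<Sum>t<N. \<Sum>t'<N. (if t = t' then of_nat N else 0) * (\<phi> t x * cnj (\<phi> t' y)))"
    by (intro sum.cong refl) (simp only: sum_unity_root_orthogonal[OF N] lessThan_iff)
  also have "\<dots> = (\<Sum>t<N. \<Sum>t'<N. if t = t' then of_nat N * (\<phi> t x * cnj (\<phi> t' y)) else 0)"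
    by (intro sum.cong refl) simp
  also have "\<dots> = of_nat N * (\<Sum>t<N. outer (\<phi> t) x y)"
    by (simp add: outer_def sum_distrib_left)
  finally show ?thesis .
qed

lemma sum_lessThan_cyclic_shift:
  fixes h :: "nat \<Rightarrow> 'a::cancel_comm_monoid_add"
  assumes "h N = h 0"
  shows "(\<Sum>t<N. h (Suc t)) = (\<Sum>t<N. h t)"
proof -
  have "h 0 + (\<Sum>t<N. h (Suc t)) = (\<Sum>t<N. h t) + h N"
    by (simp only: sum.lessThan_Suc_shift[symmetric] sum.lessThan_Suc)
  with assms show ?thesis
    by (simp add: add.commute)
qed

lemma dft_orbit_shift:
  assumes N: "0 < N" and period: "f ^^ N = id"
  shows "(\<Sum>t<N. unity_root N ^ (s * t) * g ((f ^^ Suc t) i))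
    = cnj (unity_root N) ^ s * (\<Sum>t<N. unity_root N ^ (s * t) * g ((f ^^ t) i))"
proof -
  define h where "h t = unity_root N ^ (s * t) * g ((f ^^ t) i)" for t
  have "h N = h 0"
    using unity_root_power_N[OF N] period by (simp add: h_def mult.commute[of s] power_mult)
  have "unity_root N ^ s * (\<Sum>t<N. unity_root N ^ (s * t) * g ((f ^^ Suc t) i))
      = (\<Sum>t<N. h (Suc t))"
    by (simp add: h_def sum_distrib_left power_add mult_ac)
  also have "\<dots> = (\<Sum>t<N. h t)"
    by (rule sum_lessThan_cyclic_shift) fact
  finally have shifted: "unity_root N ^ s * (\<Sum>t<N. unity_root N ^ (s * t) * g ((f ^^ Suc t) i))
      = (\<Sum>t<N. h t)" .
  have "(\<Sum>t<N. unity_root N ^ (s * t) * g ((f ^^ Suc t) i))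
      = (cnj (unity_root N ^ s) * unity_root N ^ s)
        * (\<Sum>t<N. unity_root N ^ (s * t) * g ((f ^^ Suc t) i))"
    by (simp only: cnj_unity_root_power_mult mult_1)
  also have "\<dots> = cnj (unity_root N ^ s) * (\<Sum>t<N. h t)"
    by (simp only: mult.assoc shifted)
  finally show ?thesis
    by (simp add: h_def)
qed

section \<open>Perfect matchings\<close>

definition mate :: "('v \<Rightarrow> 'v \<Rightarrow> bool) \<Rightarrow> 'v \<Rightarrow> 'v" where
  "mate E v = (THE w. E v w)"

definition edge_vec :: "('v \<Rightarrow> 'v \<Rightarrow> bool) \<Rightarrow> 'v \<Rightarrow> 'v \<Rightarrow> complex" where
  "edge_vec E v = (\<lambda>x. basis_vec v x - basis_vec (mate E v) x)"

lemma basis_vec_commute: "basis_vec c x = basis_vec x c"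
  by (auto simp: basis_vec_def)

context
  fixes E :: "'v::finite \<Rightarrow> 'v \<Rightarrow> bool"
  assumes pm: "perfect_matching E"
begin

lemma perfect_matching_iff_mate: "E v w \<longleftrightarrow> w = mate E v"
proof -
  have "\<exists>!w. E v w"
    using pm by (simp add: perfect_matching_def)
  then show ?thesis
    unfolding mate_def by (metis theI')
qed

lemma mate_mate [simp]: "mate E (mate E v) = v"
  using pm perfect_matching_iff_mate
  by (metis perfect_matching_def simple_graph_def)

lemma mate_neq: "v \<noteq> mate E v"
  using pm perfect_matching_iff_mate
  by (metis perfect_matching_def simple_graph_def)

lemma mate_eq_iff: "mate E v = w \<longleftrightarrow> v = mate E w"
  by auto

lemma degree_perfect_matching: "degree E v = 1"
  by (simp add: degree_def perfect_matching_iff_mate)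

lemma card_UNIV_perfect_matching: "card (UNIV :: 'v set) = 2 * num_edges E"
proof -
  define C where "C = {{v, w} | v w. E v w}"
  have C: "C = (\<lambda>v. {v, mate E v}) ` UNIV"
    by (auto simp: C_def perfect_matching_iff_mate)
  have "2 * card C = card (\<Union>C)"
  proof (rule card_partition)
    show "card c = 2" if "c \<in> C" for c
      using that mate_neq by (auto simp: C card_insert_if)
    show "c1 \<inter> c2 = {}" if "c1 \<in> C" "c2 \<in> C" "c1 \<noteq> c2" for c1 c2
      using that by (auto simp: C mate_eq_iff)
  qed simp_all
  moreover have "\<Union>C = UNIV"
    by (auto simp: C)
  ultimately show ?thesis
    by (simp add: num_edges_def C_def)
qed

lemma basis_vec_mate: "basis_vec (mate E v) x = basis_vec (mate E x) v"
  by (auto simp: basis_vec_def mate_eq_iff)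

lemma laplacian_perfect_matching: "laplacian E x y = basis_vec x y - basis_vec (mate E x) y"
  by (simp add: laplacian_def deg_mat_def adj_mat_def degree_perfect_matching
      perfect_matching_iff_mate basis_vec_def eq_commute[of y])

lemma laplacian_eq_sum_outer_edge_vec:
  "laplacian E x y = (\<Sum>v\<in>UNIV. outer (edge_vec E v) x y) / 2"
proof -
  have "outer (edge_vec E v) x y
      = basis_vec x v * basis_vec y v - basis_vec x v * basis_vec (mate E y) v
        - basis_vec (mate E x) v * basis_vec y v + basis_vec (mate E x) v * basis_vec (mate E y) v"
    for v
    by (simp add: outer_def edge_vec_def basis_vec_mate basis_vec_commute[of v] algebra_simps)
  then have "(\<Sum>v\<in>UNIV. outer (edge_vec E v) x y)
      = basis_vec y x - basis_vec (mate E y) x - basis_vec y (mate E x)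
        + basis_vec (mate E y) (mate E x)"
    by (simp only: sum.distrib sum_subtractf sum_basis_vec_mult)
  also have "\<dots> = 2 * laplacian E x y"
    by (simp add: laplacian_perfect_matching basis_vec_def mate_eq_iff)
  finally show ?thesis
    by simp
qed

lemma trace_density_of_graph_perfect_matching: "trace (density_of_graph E) = 1"
proof -
  have "trace (laplacian E) = of_nat (card (UNIV :: 'v set))"
    by (simp add: trace_def laplacian_perfect_matching basis_vec_def mate_neq)
  moreover have "num_edges E \<noteq> 0"
    using card_UNIV_perfect_matching finite_UNIV_card_ge_0[where 'a = 'v] by simp
  ultimately show ?thesis
    by (simp add: trace_def density_of_graph_def card_UNIV_perfect_matching
        sum_divide_distrib[symmetric])
qed

lemma outer_edge_vec_mate: "outer (edge_vec E (mate E v)) = outer (edge_vec E v)"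
  by (simp add: outer_def edge_vec_def fun_eq_iff algebra_simps)

end

lemma degree_partial_transpose_graph_perfect_matching:
  fixes E :: "'a::finite \<times> 'b::finite \<Rightarrow> 'a \<times> 'b \<Rightarrow> bool"
  assumes "perfect_matching E"
  shows "degree (partial_transpose_graph E) (a, b) = card {j. snd (mate E (a, j)) = b}"
proof -
  have "{w. partial_transpose_graph E (a, b) w}
      = (\<lambda>j. (fst (mate E (a, j)), j)) ` {j. snd (mate E (a, j)) = b}"
    by (auto simp: partial_transpose_graph_def perfect_matching_iff_mate[OF assms] prod_eq_iff)
  moreover have "inj (\<lambda>j. (fst (mate E (a, j)), j))"
    by (rule injI) simp
  ultimately show ?thesis
    by (simp add: degree_def card_image inj_on_subset)
qed

definition crossing_set :: "('a \<times> bool \<Rightarrow> 'a \<times> bool \<Rightarrow> bool) \<Rightarrow> 'a set" where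
  "crossing_set E = {i. snd (mate E (i, False))}"

definition cross_perm :: "('a \<times> bool \<Rightarrow> 'a \<times> bool \<Rightarrow> bool) \<Rightarrow> 'a \<Rightarrow> 'a" where
  "cross_perm E i = (if i \<in> crossing_set E then fst (mate E (i, False)) else i)"

lemma mate_crossing: "i \<in> crossing_set E \<Longrightarrow> mate E (i, False) = (cross_perm E i, True)"
  by (simp add: cross_perm_def crossing_set_def prod_eq_iff)

lemma edge_vec_crossing:
  "i \<in> crossing_set E \<Longrightarrow>
     edge_vec E (i, False) = (\<lambda>(a, b). if b then - basis_vec (cross_perm E i) a else basis_vec i a)"
  by (auto simp: edge_vec_def mate_crossing basis_vec_def fun_eq_iff)

lemma edge_vec_noncrossing:
  "snd (mate E v) = snd v \<Longrightarrow>
     edge_vec E v = tensor_vec (\<lambda>a. basis_vec (fst v) a - basis_vec (fst (mate E v)) a) (basis_vec (snd v))"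
  by (cases v; cases "mate E v") (auto simp: edge_vec_def tensor_vec_def basis_vec_def fun_eq_iff)

context
  fixes E :: "'a::finite \<times> bool \<Rightarrow> 'a \<times> bool \<Rightarrow> bool"
  assumes pm: "perfect_matching E"
begin

lemma image_mate_crossing:
  "mate E ` (\<lambda>i. (i, False)) ` crossing_set E = {v. snd v \<and> \<not> snd (mate E v)}"
proof (intro equalityI subsetI)
  fix v assume v: "v \<in> {v. snd v \<and> \<not> snd (mate E v)}"
  then have m: "mate E v = (fst (mate E v), False)"
    by (simp add: prod_eq_iff)
  then have "mate E (fst (mate E v), False) = v"
    by (metis mate_mate[OF pm])
  with v have "fst (mate E v) \<in> crossing_set E"
    by (simp add: crossing_set_def)
  then have "mate E v \<in> (\<lambda>i. (i, False)) ` crossing_set E"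
    by (subst m) (rule imageI)
  then show "v \<in> mate E ` (\<lambda>i. (i, False)) ` crossing_set E"
    by (rule image_eqI[rotated]) (rule mate_mate[OF pm, symmetric])
next
  fix v assume "v \<in> mate E ` (\<lambda>i. (i, False)) ` crossing_set E"
  then obtain i where i: "i \<in> crossing_set E" "v = mate E (i, False)"
    by auto
  have "mate E v = (i, False)"
    unfolding i(2) by (rule mate_mate[OF pm])
  moreover have "snd v"
    using i by (simp add: mate_crossing)
  ultimately show "v \<in> {v. snd v \<and> \<not> snd (mate E v)}"
    by simp
qed

lemma sum_split_crossing:
  fixes g :: "'a \<times> bool \<Rightarrow> complex"
  assumes g: "\<And>v. g (mate E v) = g v"
  shows "(\<Sum>v\<in>UNIV. g v)
    = (\<Sum>v\<in>{v. snd (mate E v) = snd v}. g v) + 2 * (\<Sum>i\<in>crossing_set E. g (i, False))"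
proof -
  define NC where "NC = {v. snd (mate E v) = snd v}"
  define C where "C = (\<lambda>i. (i, False)) ` crossing_set E"
  have mate_C: "mate E ` C = {v. snd v \<and> \<not> snd (mate E v)}"
    unfolding C_def by (rule image_mate_crossing)
  have "v \<in> C" if "\<not> snd v" and "snd (mate E v) \<noteq> snd v" for v
    using that by (cases v) (auto simp: C_def crossing_set_def)
  then have U: "UNIV = NC \<union> (C \<union> mate E ` C)"
    by (auto simp: NC_def mate_C)
  have "NC \<inter> (C \<union> mate E ` C) = {}" "C \<inter> mate E ` C = {}"
    unfolding mate_C by (auto simp: NC_def C_def crossing_set_def)
  then have "(\<Sum>v\<in>UNIV. g v) = (\<Sum>v\<in>NC. g v) + ((\<Sum>v\<in>C. g v) + (\<Sum>v\<in>mate E ` C. g v))"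
    by (subst U) (simp add: sum.union_disjoint)
  moreover have "(\<Sum>v\<in>mate E ` C. g v) = (\<Sum>v\<in>C. g v)"
  proof -
    have "inj (mate E)"
      by (metis injI mate_mate[OF pm])
    then show ?thesis
      using g by (simp add: sum.reindex inj_on_subset[of _ UNIV])
  qed
  moreover have "(\<Sum>v\<in>C. g v) = (\<Sum>i\<in>crossing_set E. g (i, False))"
    by (simp add: C_def sum.reindex inj_on_def)
  ultimately show ?thesis
    by (simp add: NC_def)
qed

end

context
  fixes E :: "'a::finite \<times> bool \<Rightarrow> 'a \<times> bool \<Rightarrow> bool"
  assumes pm: "perfect_matching E"
    and deg: "deg_mat E = deg_mat (partial_transpose_graph E)"
begin

text \<open>By the degree condition at \<open>(a, True)\<close>, exactly one of \<open>(a, False)\<close> and \<open>(a, True)\<close>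
  has its mate in the \<open>True\<close> layer.\<close>
lemma crossing_set_iff: "a \<in> crossing_set E \<longleftrightarrow> \<not> snd (mate E (a, True))"
proof -
  have "degree (partial_transpose_graph E) (a, True) = degree E (a, True)"
    using fun_cong[OF fun_cong[OF deg, of "(a, True)"], of "(a, True)"] by (simp add: deg_mat_def)
  then have "card {j. snd (mate E (a, j))} = 1"
    by (simp add: degree_partial_transpose_graph_perfect_matching[OF pm]
        degree_perfect_matching[OF pm])
  moreover have "{j. snd (mate E (a, j))}
      = (if snd (mate E (a, False)) then {False} else {}) \<union> (if snd (mate E (a, True)) then {True} else {})"
  proof (rule set_eqI)
    show "j \<in> {j. snd (mate E (a, j))} \<longleftrightarrow> j \<in> (if snd (mate E (a, False)) then {False} else {})
        \<union> (if snd (mate E (a, True)) then {True} else {})" for j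
      by (cases j) auto
  qed
  ultimately show ?thesis
    by (auto simp: crossing_set_def split: if_splits)
qed

lemma cross_perm_in_crossing_set:
  assumes "i \<in> crossing_set E"
  shows "cross_perm E i \<in> crossing_set E"
proof -
  have "mate E (cross_perm E i, True) = (i, False)"
    using mate_crossing[OF assms] mate_mate[OF pm, of "(i, False)"] by simp
  then show ?thesis
    by (simp add: crossing_set_iff)
qed

lemma cross_perm_permutes: "cross_perm E permutes crossing_set E"
proof (rule bij_imp_permutes)
  have inj: "inj (cross_perm E)"
  proof (rule injI)
    fix i j assume eq: "cross_perm E i = cross_perm E j"
    show "i = j"
    proof (cases "i \<in> crossing_set E"; cases "j \<in> crossing_set E")
      assume "i \<in> crossing_set E" "j \<in> crossing_set E"
      then have "mate E (i, False) = mate E (j, False)"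
        using eq by (simp add: mate_crossing)
      then show "i = j"
        by (metis mate_mate[OF pm] prod.inject)
    qed (use eq cross_perm_in_crossing_set in \<open>auto simp: cross_perm_def\<close>)
  qed
  moreover have "cross_perm E ` crossing_set E = crossing_set E"
    using inj cross_perm_in_crossing_set
    by (intro endo_inj_surj) (auto simp: inj_on_subset[of _ UNIV])
  ultimately show "bij_betw (cross_perm E) (crossing_set E) (crossing_set E)"
    by (simp add: bij_betw_def inj_on_subset[of _ UNIV])
qed (simp add: cross_perm_def)

lemma cross_perm_period: obtains N where "0 < N" and "cross_perm E ^^ N = id"
proof -
  have "permutation (cross_perm E)"
    using cross_perm_permutes by (auto simp: permutation_permutes)
  then show ?thesis
    using that permutation_is_nilpotent by blast
qed

lemma dft_crossing_edge_vec_eq_tensor_vec: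
  assumes N: "0 < N" and period: "cross_perm E ^^ N = id" and i: "i \<in> crossing_set E"
  shows "(\<lambda>x. \<Sum>t<N. unity_root N ^ (s * t) * edge_vec E ((cross_perm E ^^ t) i, False) x)
    = tensor_vec (\<lambda>a. \<Sum>t<N. unity_root N ^ (s * t) * basis_vec ((cross_perm E ^^ t) i) a)
        (\<lambda>b. if b then - (cnj (unity_root N) ^ s) else 1)"
proof -
  have "(cross_perm E ^^ t) i \<in> crossing_set E" for t
    using permutes_in_image[OF permutes_funpow[OF cross_perm_permutes]] i by blast
  then have "edge_vec E ((cross_perm E ^^ t) i, False) (a, b)
      = (if b then - basis_vec ((cross_perm E ^^ Suc t) i) a else basis_vec ((cross_perm E ^^ t) i) a)"
    for t a b
    by (simp add: edge_vec_crossing)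
  then show ?thesis
    using dft_orbit_shift[OF N period, of s "\<lambda>c. basis_vec c _" i]
    by (auto simp: fun_eq_iff tensor_vec_def sum_negf)
qed

lemma separable_cone_crossing_part:
  "separable_cone (\<lambda>x y. \<Sum>i\<in>crossing_set E. outer (edge_vec E (i, False)) x y)"
proof -
  obtain N where N: "0 < N" and period: "cross_perm E ^^ N = id"
    by (rule cross_perm_period)
  define \<Phi> where "\<Phi> i s = (\<lambda>x. \<Sum>t<N. unity_root N ^ (s * t) * edge_vec E ((cross_perm E ^^ t) i, False) x)"
    for i s
  have "(\<Sum>i\<in>crossing_set E. \<Sum>s<N. outer (\<Phi> i s) x y)
      = of_nat N * (\<Sum>t<N. \<Sum>i\<in>crossing_set E. outer (edge_vec E ((cross_perm E ^^ t) i, False)) x y)"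
    for x y
    by (simp add: \<Phi>_def sum_outer_dft[OF N] sum_distrib_left sum.swap[of _ "crossing_set E"])
  also have "\<dots> x y = of_nat N * of_nat N * (\<Sum>i\<in>crossing_set E. outer (edge_vec E (i, False)) x y)"
    for x y
  proof -
    have "(\<Sum>i\<in>crossing_set E. outer (edge_vec E ((cross_perm E ^^ t) i, False)) x y)
        = (\<Sum>i\<in>crossing_set E. outer (edge_vec E (i, False)) x y)" for t
      using sum.reindex_bij_betw[OF permutes_imp_bij[OF permutes_funpow[OF cross_perm_permutes]],
          of "\<lambda>z. outer (edge_vec E (z, False)) x y" t]
      by simp
    then show ?thesis
      by simp
  qed
  finally have "(\<lambda>x y. \<Sum>i\<in>crossing_set E. outer (edge_vec E (i, False)) x y)
      = (\<lambda>x y. of_real (1 / (real N * real N)) * (\<Sum>i\<in>crossing_set E. \<Sum>s<N. outer (\<Phi> i s) x y))"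
    using N by (simp add: fun_eq_iff)
  moreover have "separable_cone (\<lambda>x y. \<Sum>i\<in>crossing_set E. \<Sum>s<N. outer (\<Phi> i s) x y)"
    by (intro separable_cone_sum)
      (simp_all add: \<Phi>_def dft_crossing_edge_vec_eq_tensor_vec[OF N period]
        separable_cone_outer_tensor_vec)
  ultimately show ?thesis
    by (simp only:) (rule separable_cone_scale, simp_all)
qed

lemma separable_cone_laplacian: "separable_cone (laplacian E)"
proof -
  define NC where "NC = {v. snd (mate E v) = snd v}"
  have "laplacian E x y = of_real (1 / 2) * (\<Sum>v\<in>NC. outer (edge_vec E v) x y)
      + (\<Sum>i\<in>crossing_set E. outer (edge_vec E (i, False)) x y)" for x y
    using sum_split_crossing[OF pm, of "\<lambda>v. outer (edge_vec E v) x y"] outer_edge_vec_mate[OF pm]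
    by (simp add: laplacian_eq_sum_outer_edge_vec[OF pm] NC_def)
  then have "laplacian E = (\<lambda>x y. of_real (1 / 2) * (\<Sum>v\<in>NC. outer (edge_vec E v) x y)
      + (\<Sum>i\<in>crossing_set E. outer (edge_vec E (i, False)) x y))"
    by (intro ext)
  moreover have "separable_cone (\<lambda>x y. \<Sum>v\<in>NC. outer (edge_vec E v) x y)"
    by (intro separable_cone_sum)
      (simp_all add: NC_def edge_vec_noncrossing separable_cone_outer_tensor_vec)
  ultimately show ?thesis
    by (simp only:) (intro separable_cone_add separable_cone_scale separable_cone_crossing_part, simp_all)
qed

end

theorem theorem4:
  fixes E :: "'a::finite \<times> bool \<Rightarrow> 'a \<times> bool \<Rightarrow> bool"
  assumes "perfect_matching E"
  shows "separable (density_of_graph E) \<longleftrightarrow>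
         deg_mat E = deg_mat (partial_transpose_graph E)"
proof
  assume "separable (density_of_graph E)"
  then show "deg_mat E = deg_mat (partial_transpose_graph E)"
    by (rule separable_density_of_graph_imp_deg_mat_eq)
next
  assume deg: "deg_mat E = deg_mat (partial_transpose_graph E)"
  have "density_of_graph E = (\<lambda>v w. of_real (1 / real (2 * num_edges E)) * laplacian E v w)"
    by (simp add: density_of_graph_def fun_eq_iff)
  then have "separable_cone (density_of_graph E)"
    by (simp only:) (rule separable_cone_scale, simp_all add: separable_cone_laplacian[OF assms deg])
  then show "separable (density_of_graph E)"
    using trace_density_of_graph_perfect_matching[OF assms] by (rule separable_if_separable_cone)
qed

end
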